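(* Let $K\ge 2$ and $\Theta=\{(\theta_1,\ldots,\theta_K):\sum_k\theta_k=1,\ \theta_k\ge0\}$. Consider Dempster's Simplex-DSM posterior for a multinomial sample of size $n=1$ with observation $X=1$: its random focal elements are $$\mathbf e(Z)=\Big\{\theta\in\Theta:\ \frac{Z_1}{\theta_1}\le\frac{Z_j}{\theta_j},\ j=2,\ldots,K\Big\},\qquad Z_1,\ldots,Z_K\stackrel{iid}{\sim}\mathrm{Expo}(1).$$ Fix $\theta_1\in(0,1)$ and consider the conditional posterior model for $\theta_{-1}\equiv(\theta_2,\ldots,\theta_K)/(1-\theta_1)$ given this value of $\theta_1$ (obtained by intersecting each focal element with $\{\theta\in\Theta:\ \text{first coordinate}=\theta_1\}$, conditioning on non-empty intersection, and mapping the result to the values of $\theta_{-1}$, which lie in the $(K-2)$-simplex $\mathcal S_{K-2}$). Then the vacuous focal element $\mathcal S_{K-2}$ receives mass $$\Pr(\mathcal S_{K-2})=\frac{1}{1+(K-2)(1-\theta_1)}\cdot\frac{1}{1+\sum_{i=1}^{K-2}(1-\theta_1)^i}.$$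
   Context: A Dempster–Shafer model (DSM) here is a random set (focal element) in the parameter space; conditioning a DSM on an event means intersecting the random set with that event and restricting to (conditioning on) non-empty intersections. The mass of $\mathcal S_{K-2}$ is the conditional probability that the resulting random set of $\theta_{-1}$-values is all of $\mathcal S_{K-2}$. *)

theory Defs
  imports "HOL-Probability.Probability"
begin

text \<open>Probability prob_simplex with coordinates indexed by 1..m (extensional functions).
  Theta = prob_simplex K; S_{K-2} = prob_simplex (K-1).\<close>
definition prob_simplex :: "nat \<Rightarrow> (nat \<Rightarrow> real) set" where
  "prob_simplex m = {x. x \<in> ({1..m} \<rightarrow>\<^sub>E UNIV) \<and> (\<forall>i\<in>{1..m}. 0 \<le> x i) \<and> (\<Sum>i=1..m. x i) = 1}"

definition Zmeasure :: "nat \<Rightarrow> (nat \<Rightarrow> real) measure" where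
  "Zmeasure K = PiM {1..K} (\<lambda>_. density lborel (exponential_density 1))"

text \<open>Focal element e(Z) of the Simplex-DSM posterior for n = 1, X = 1.
  Ratios are taken in the extended reals, so z/0 = +infinity for z > 0.\<close>
definition focal :: "nat \<Rightarrow> (nat \<Rightarrow> real) \<Rightarrow> (nat \<Rightarrow> real) set" where
  "focal K Z = {\<theta> \<in> prob_simplex K. \<forall>j\<in>{2..K}.
      ereal (Z 1) / ereal (\<theta> 1) \<le> ereal (Z j) / ereal (\<theta> j)}"

text \<open>Conditional focal element for theta_{-1} = (theta_2,...,theta_K)/(1-theta_1) given theta_1 = t,
  as a set of points of prob_simplex (K-1) (coordinate j of theta_{-1} is theta_{j+1}/(1-t)).\<close>
definition cond_focal :: "nat \<Rightarrow> real \<Rightarrow> (nat \<Rightarrow> real) \<Rightarrow> (nat \<Rightarrow> real) set" where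
  "cond_focal K t Z = (\<lambda>\<theta>. restrict (\<lambda>j. \<theta> (j + 1) / (1 - t)) {1..K-1})
      ` (focal K Z \<inter> {\<theta>. \<theta> 1 = t})"

end

theory Submission
  imports Defs
begin

text \<open>
  Fix theta_1 = t and rescale the remaining coordinates to w_j = theta_(j+1) / (1 - t).  The
  constraint Z_1 / theta_1 <= Z_(j+1) / theta_(j+1) then reads (1 - t) Z_1 w_j <= t Z_(j+1), so the
  conditional focal element is the simplex S_(K-2) cut by a box of intervals [lo_j, hi_j].
  Almost surely all Z_j > 0, and then the intervals are [0, t Z_(j+1) / ((1 - t) Z_1)]: the cut is
  all of S_(K-2) iff every hi_j >= 1, i.e. Z_j >= (1 - t)/t Z_1 for j >= 2, and it is non-empty
  iff hi_1 + ... + hi_(K-1) >= 1, i.e. unless t/(1 - t) (Z_2 + ... + Z_K) < Z_1.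
  Integrating over Z_1 last, resp. first, and using E exp(-c Z) = 1/(1 + c) for Z ~ Expo(1), these
  events have probabilities t / (1 + (K-2)(1 - t)) and 1 - (1 - t)^(K-1) = t (1 + (1 - t) + ... +
  (1 - t)^(K-2)), and the mass of S_(K-2) is their ratio.  Degenerate Z form a null set, but the
  events must still be measurable, which is why the box is described for every Z.
\<close>

lemma sum_atLeast2_atMost_shift:
  fixes f :: "nat \<Rightarrow> 'a::comm_monoid_add"
  assumes "1 \<le> m"
  shows "(\<Sum>i=2..m. f i) = (\<Sum>j=1..m - 1. f (j + 1))"
proof -
  have "(\<Sum>i=2..m. f i) = (\<Sum>i=Suc 1..Suc (m - 1). f i)"
    using assms by (simp add: numeral_2_eq_2)
  also have "\<dots> = (\<Sum>j=1..m - 1. f (j + 1))"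
    by (subst sum.shift_bounds_cl_Suc_ivl) simp
  finally show ?thesis .
qed

lemma sum_atLeast1_atMost_split:
  fixes f :: "nat \<Rightarrow> 'a::comm_monoid_add"
  assumes "1 \<le> m"
  shows "(\<Sum>i=1..m. f i) = f 1 + (\<Sum>j=1..m - 1. f (j + 1))"
  using sum.atLeast_Suc_atMost[OF assms, of f] sum_atLeast2_atMost_shift[OF assms, of f] by (simp add: numeral_2_eq_2)

lemma ball_atLeast2_atMost_shift:
  fixes m :: nat
  shows "(\<forall>j\<in>{1..m - 1}. P (j + 1)) \<longleftrightarrow> (\<forall>j\<in>{2..m}. P j)"
proof (intro iffI ballI)
  fix j assume shifted: "\<forall>j\<in>{1..m - 1}. P (j + 1)" and j: "j \<in> {2..m}"
  then have "j - 1 \<in> {1..m - 1}" "j - 1 + 1 = j" by auto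
  then show "P j" using shifted by metis
qed auto

lemma prob_simplexD:
  assumes "w \<in> prob_simplex m"
  shows "w \<in> {1..m} \<rightarrow>\<^sub>E UNIV" "\<And>j. j \<in> {1..m} \<Longrightarrow> 0 \<le> w j" "(\<Sum>j=1..m. w j) = 1"
  using assms unfolding prob_simplex_def by auto

lemma prob_simplex_le_1:
  assumes "w \<in> prob_simplex m" "j \<in> {1..m}"
  shows "w j \<le> 1"
proof -
  have "w j \<le> (\<Sum>i=1..m. w i)"
    using assms by (intro member_le_sum) (auto dest: prob_simplexD)
  then show ?thesis using prob_simplexD(3)[OF assms(1)] by simp
qed

lemma prob_simplex_vertex:
  assumes "j \<in> {1..m}"
  shows "restrict (\<lambda>i. if i = j then 1 else 0) {1..m} \<in> prob_simplex m"
  using assms unfolding prob_simplex_def by auto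

lemma rescaled_tail_in_prob_simplex:
  assumes "\<theta> \<in> prob_simplex K" "1 \<le> K" "\<theta> 1 < 1"
  shows "restrict (\<lambda>j. \<theta> (j + 1) / (1 - \<theta> 1)) {1..K - 1} \<in> prob_simplex (K - 1)"
proof -
  have "(\<Sum>j=1..K - 1. \<theta> (j + 1)) = 1 - \<theta> 1"
    using sum_atLeast1_atMost_split[OF assms(2), of \<theta>] prob_simplexD(3)[OF assms(1)] by simp
  then have "(\<Sum>j=1..K - 1. \<theta> (j + 1) / (1 - \<theta> 1)) = 1"
    using assms(3) by (simp add: sum_divide_distrib[symmetric])
  moreover have "0 \<le> \<theta> (j + 1) / (1 - \<theta> 1)" if "j \<in> {1..K - 1}" for j
    using that assms(3) prob_simplexD(2)[OF assms(1), of "j + 1"] by auto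
  ultimately show ?thesis
    unfolding prob_simplex_def by auto
qed

lemma prepend_in_prob_simplex:
  assumes "w \<in> prob_simplex (K - 1)" "1 \<le> K" "0 \<le> t" "t \<le> 1"
  shows "restrict (\<lambda>i. if i = 1 then t else (1 - t) * w (i - 1)) {1..K} \<in> prob_simplex K"
    (is "?\<theta> \<in> _")
proof -
  have "(\<Sum>i=1..K. ?\<theta> i) = t + (\<Sum>j=1..K - 1. ?\<theta> (j + 1))"
    using sum_atLeast1_atMost_split[OF assms(2), of ?\<theta>] assms(2) by simp
  also have "\<dots> = t + (\<Sum>j=1..K - 1. (1 - t) * w j)"
    by (intro arg_cong2[where f = "(+)"] sum.cong) auto
  also have "\<dots> = t + (1 - t) * (\<Sum>j=1..K - 1. w j)"
    by (simp add: sum_distrib_left)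
  also have "\<dots> = 1"
    using prob_simplexD(3)[OF assms(1)] by simp
  finally have "(\<Sum>i=1..K. ?\<theta> i) = 1" .
  moreover have "0 \<le> ?\<theta> i" if "i \<in> {1..K}" for i
  proof (cases "i = 1")
    case False
    then have "i - 1 \<in> {1..K - 1}" using that by auto
    then show ?thesis using that assms prob_simplexD(2)[OF assms(1)] by auto
  qed (use that assms in auto)
  ultimately show ?thesis
    unfolding prob_simplex_def by auto
qed

lemma prob_simplex_slice_image:
  assumes "1 \<le> K" "0 \<le> t" "t < 1"
  shows "(\<lambda>\<theta>. restrict (\<lambda>j. \<theta> (j + 1) / (1 - t)) {1..K - 1})
           ` {\<theta> \<in> prob_simplex K. \<theta> 1 = t \<and> (\<forall>j\<in>{2..K}. P j (\<theta> j))}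
       = {w \<in> prob_simplex (K - 1). \<forall>j\<in>{1..K - 1}. P (j + 1) ((1 - t) * w j)}"
proof (intro equalityI subsetI)
  fix w assume "w \<in> (\<lambda>\<theta>. restrict (\<lambda>j. \<theta> (j + 1) / (1 - t)) {1..K - 1})
           ` {\<theta> \<in> prob_simplex K. \<theta> 1 = t \<and> (\<forall>j\<in>{2..K}. P j (\<theta> j))}"
  then obtain \<theta> where \<theta>: "\<theta> \<in> prob_simplex K" "\<theta> 1 = t" "\<forall>j\<in>{2..K}. P j (\<theta> j)"
    and w: "w = restrict (\<lambda>j. \<theta> (j + 1) / (1 - t)) {1..K - 1}"
    by blast
  have "w \<in> prob_simplex (K - 1)"
    using rescaled_tail_in_prob_simplex[OF \<theta>(1) assms(1)] \<theta>(2) assms(3) w by simp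
  moreover have "P (j + 1) ((1 - t) * w j)" if "j \<in> {1..K - 1}" for j
    using that \<theta>(3) assms(3) w by auto
  ultimately show "w \<in> {w \<in> prob_simplex (K - 1). \<forall>j\<in>{1..K - 1}. P (j + 1) ((1 - t) * w j)}"
    by blast
next
  fix w assume w: "w \<in> {w \<in> prob_simplex (K - 1). \<forall>j\<in>{1..K - 1}. P (j + 1) ((1 - t) * w j)}"
  define \<theta> where "\<theta> = restrict (\<lambda>i. if i = 1 then t else (1 - t) * w (i - 1)) {1..K}"
  have "\<theta> \<in> prob_simplex K"
    unfolding \<theta>_def using w assms by (intro prepend_in_prob_simplex) auto
  moreover have "\<forall>j\<in>{2..K}. P j (\<theta> j)"
  proof
    fix j assume "j \<in> {2..K}"
    then have "j - 1 \<in> {1..K - 1}" "j - 1 + 1 = j" by auto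
    then show "P j (\<theta> j)" using w \<open>j \<in> {2..K}\<close> unfolding \<theta>_def by force
  qed
  moreover have "\<theta> 1 = t"
    using assms(1) unfolding \<theta>_def by simp
  moreover have "w = restrict (\<lambda>j. \<theta> (j + 1) / (1 - t)) {1..K - 1}"
  proof
    fix j
    show "w j = restrict (\<lambda>j. \<theta> (j + 1) / (1 - t)) {1..K - 1} j"
      using prob_simplexD(1)[of w "K - 1"] w assms(3) unfolding \<theta>_def by (auto simp: PiE_def extensional_def)
  qed
  ultimately show "w \<in> (\<lambda>\<theta>. restrict (\<lambda>j. \<theta> (j + 1) / (1 - t)) {1..K - 1})
           ` {\<theta> \<in> prob_simplex K. \<theta> 1 = t \<and> (\<forall>j\<in>{2..K}. P j (\<theta> j))}"
    by blast
qed

section \<open>The probability simplex cut by a coordinate box\<close>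

definition coord_box :: "nat \<Rightarrow> (nat \<Rightarrow> real) \<Rightarrow> (nat \<Rightarrow> ereal) \<Rightarrow> (nat \<Rightarrow> real) set" where
  "coord_box m lo hi = {w. \<forall>j\<in>{1..m}. lo j \<le> w j \<and> ereal (w j) \<le> hi j}"

lemma prob_simplex_subset_coord_box_iff:
  assumes "1 \<le> m"
  shows "prob_simplex m \<subseteq> coord_box m lo hi \<longleftrightarrow>
         (\<forall>j\<in>{1..m}. lo j \<le> (if m = 1 then 1 else 0) \<and> 1 \<le> hi j)"
proof
  assume box: "prob_simplex m \<subseteq> coord_box m lo hi"
  show "\<forall>j\<in>{1..m}. lo j \<le> (if m = 1 then 1 else 0) \<and> 1 \<le> hi j"
  proof
    fix j assume j: "j \<in> {1..m}"
    have "restrict (\<lambda>i. if i = j then 1 else 0) {1..m} \<in> coord_box m lo hi"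
      using box prob_simplex_vertex[OF j] by blast
    then have "lo j \<le> 1 \<and> 1 \<le> hi j"
      using j unfolding coord_box_def by (auto dest!: bspec[of _ _ j] simp: one_ereal_def)
    moreover have "lo j \<le> 0" if "m \<noteq> 1"
    proof -
      define k where "k = (if j = 1 then 2 else 1::nat)"
      have "k \<in> {1..m}" "k \<noteq> j" using that assms j unfolding k_def by auto
      then have "restrict (\<lambda>i. if i = k then 1 else 0) {1..m} \<in> coord_box m lo hi"
        using box prob_simplex_vertex[of k m] by blast
      then show ?thesis using j \<open>k \<noteq> j\<close> unfolding coord_box_def by (auto dest!: bspec[of _ _ j])
    qed
    ultimately show "lo j \<le> (if m = 1 then 1 else 0) \<and> 1 \<le> hi j" by simp
  qed
next
  assume bounds: "\<forall>j\<in>{1..m}. lo j \<le> (if m = 1 then 1 else 0) \<and> 1 \<le> hi j"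
  show "prob_simplex m \<subseteq> coord_box m lo hi"
    unfolding coord_box_def
  proof (intro subsetI CollectI ballI)
    fix w j assume w: "w \<in> prob_simplex m" and j: "j \<in> {1..m}"
    have "lo j \<le> w j"
    proof (cases "m = 1")
      case True
      then show ?thesis using bounds j prob_simplexD(3)[OF w] by auto
    next
      case False
      then show ?thesis using bounds j prob_simplexD(2)[OF w j] by fastforce
    qed
    moreover have "ereal (w j) \<le> hi j"
      using bounds j prob_simplex_le_1[OF w j] order_trans[of "ereal (w j)" 1 "hi j"]
      by (auto simp: one_ereal_def)
    ultimately show "lo j \<le> w j \<and> ereal (w j) \<le> hi j" ..
  qed
qed

lemma prob_simplex_meets_interval_box:
  fixes lo hi :: "nat \<Rightarrow> real"
  assumes "\<forall>j\<in>{1..m}. 0 \<le> lo j \<and> lo j \<le> hi j" "(\<Sum>j=1..m. lo j) \<le> 1" "1 \<le> (\<Sum>j=1..m. hi j)"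
  shows "\<exists>w\<in>prob_simplex m. \<forall>j\<in>{1..m}. lo j \<le> w j \<and> w j \<le> hi j"
proof -
  define L H where "L = (\<Sum>j=1..m. lo j)" and "H = (\<Sum>j=1..m. hi j)"
  \<comment> \<open>If H = L then s = 0 (division by zero) and L = 1, so w = lo still works.\<close>
  define s where "s = (1 - L) / (H - L)"
  define w where "w = restrict (\<lambda>j. lo j + s * (hi j - lo j)) {1..m}"
  have s: "0 \<le> s" "s \<le> 1"
    using assms(2,3) unfolding s_def L_def H_def by (auto simp: divide_le_eq_1)
  have "(\<Sum>j=1..m. w j) = L + s * (H - L)"
    unfolding w_def L_def H_def by (simp add: sum.distrib sum_subtractf flip: sum_distrib_left)
  also have "\<dots> = 1"
    using assms(2,3) unfolding s_def L_def H_def by (cases "H = L") auto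
  finally have "w \<in> prob_simplex m"
    using assms(1) s unfolding prob_simplex_def w_def by auto
  moreover have "lo j \<le> w j \<and> w j \<le> hi j" if "j \<in> {1..m}" for j
    using that assms(1) s mult_left_le_one_le[of "hi j - lo j" s] unfolding w_def by auto
  ultimately show ?thesis by blast
qed

lemma ereal_sum_min_1_ge_1:
  fixes h :: "'a \<Rightarrow> ereal"
  assumes "finite A" "\<forall>j\<in>A. 0 \<le> h j" "1 \<le> (\<Sum>j\<in>A. h j)"
  shows "1 \<le> (\<Sum>j\<in>A. min (h j) 1)"
proof (cases "\<exists>k\<in>A. 1 \<le> h k")
  case True
  then obtain k where k: "k \<in> A" "1 \<le> h k" by blast
  have "(\<Sum>j\<in>{k}. min (h j) 1) \<le> (\<Sum>j\<in>A. min (h j) 1)"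
    using assms(1,2) k(1) by (intro sum_mono2) auto
  then show ?thesis using k(2) by simp
next
  case False
  have "min (h j) 1 = h j" if "j \<in> A" for j
  proof -
    have "\<not> 1 \<le> h j" using False that by blast
    then show ?thesis by (simp add: min_def not_le less_imp_le)
  qed
  then show ?thesis using assms(3) by (simp cong: sum.cong)
qed

lemma prob_simplex_meets_coord_box:
  assumes lo: "\<forall>j\<in>{1..m}. 0 \<le> lo j" and lo_hi: "\<forall>j\<in>{1..m}. ereal (lo j) \<le> hi j"
    and lo_sum: "(\<Sum>j=1..m. lo j) \<le> 1" and hi_sum: "1 \<le> (\<Sum>j=1..m. hi j)"
  shows "prob_simplex m \<inter> coord_box m lo hi \<noteq> {}"
proof -
  \<comment> \<open>Capping the upper bounds at 1 makes them finite without losing feasibility.\<close>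
  define hi' where "hi' j = real_of_ereal (min (hi j) 1)" for j
  have min_bounds: "ereal (lo j) \<le> min (hi j) 1" "0 \<le> min (hi j) 1" if "j \<in> {1..m}" for j
  proof -
    have "lo j \<le> 1"
      using lo_sum member_le_sum[of j "{1..m}" lo] lo that by auto
    then show "ereal (lo j) \<le> min (hi j) 1"
      using lo_hi that by (auto simp: one_ereal_def)
    moreover have "0 \<le> ereal (lo j)" using lo that by simp
    ultimately show "0 \<le> min (hi j) 1" by (rule order.trans[rotated])
  qed
  have hi': "ereal (hi' j) = min (hi j) 1" if "j \<in> {1..m}" for j
    using min_bounds(2)[OF that] min.cobounded2[of "hi j" 1] unfolding hi'_def
    by (cases "min (hi j) 1") auto
  have "lo j \<le> hi' j" if "j \<in> {1..m}" for j
    using min_bounds(1)[OF that] unfolding hi'[OF that, symmetric] by simp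
  moreover have "1 \<le> (\<Sum>j=1..m. hi' j)"
  proof -
    have "1 \<le> (\<Sum>j=1..m. min (hi j) 1)"
      using lo_hi lo hi_sum by (intro ereal_sum_min_1_ge_1) (auto intro: order.trans[rotated])
    also have "\<dots> = ereal (\<Sum>j=1..m. hi' j)"
      using hi' by (simp add: sum_ereal[symmetric])
    finally show ?thesis by (simp add: one_ereal_def)
  qed
  ultimately obtain w where w: "w \<in> prob_simplex m" and w_bounds: "\<forall>j\<in>{1..m}. lo j \<le> w j \<and> w j \<le> hi' j"
    using prob_simplex_meets_interval_box[of m lo hi'] lo lo_sum by auto
  have "ereal (w j) \<le> hi j" if "j \<in> {1..m}" for j
  proof -
    have "ereal (w j) \<le> ereal (hi' j)" using w_bounds that by simp
    also have "\<dots> \<le> hi j" using hi'[OF that] by simp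
    finally show ?thesis .
  qed
  then show ?thesis
    using w w_bounds unfolding coord_box_def by blast
qed

lemma prob_simplex_Int_coord_box_nonempty_iff:
  assumes "\<forall>j\<in>{1..m}. 0 \<le> lo j"
  shows "prob_simplex m \<inter> coord_box m lo hi \<noteq> {} \<longleftrightarrow>
         (\<forall>j\<in>{1..m}. ereal (lo j) \<le> hi j) \<and> (\<Sum>j=1..m. lo j) \<le> 1 \<and> 1 \<le> (\<Sum>j=1..m. hi j)"
proof
  assume "prob_simplex m \<inter> coord_box m lo hi \<noteq> {}"
  then obtain w where w: "w \<in> prob_simplex m" and box: "\<forall>j\<in>{1..m}. lo j \<le> w j \<and> ereal (w j) \<le> hi j"
    unfolding coord_box_def by blast
  have "(\<Sum>j=1..m. lo j) \<le> (\<Sum>j=1..m. w j)"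
    using box by (intro sum_mono) auto
  moreover have "(\<Sum>j=1..m. ereal (w j)) \<le> (\<Sum>j=1..m. hi j)"
    using box by (intro sum_mono) auto
  ultimately show "(\<forall>j\<in>{1..m}. ereal (lo j) \<le> hi j) \<and> (\<Sum>j=1..m. lo j) \<le> 1 \<and> 1 \<le> (\<Sum>j=1..m. hi j)"
    using box prob_simplexD(3)[OF w] by (fastforce simp: one_ereal_def intro: order_trans[of _ "ereal (w _)"])
qed (use assms prob_simplex_meets_coord_box in blast)

section \<open>The conditional focal element\<close>

text \<open>
  The interval [ratio_lo a b, ratio_hi a b] is the set of v >= 0 with a v <= b and
  (b = 0 --> a <= 0), see ratio_interval_iff; the empty set is encoded as [1, 0].
\<close>

definition ratio_lo :: "real \<Rightarrow> real \<Rightarrow> real" where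
  "ratio_lo a b = (if a < 0 then max 0 (b / a) else if 0 < b \<or> (a = 0 \<and> b = 0) then 0 else 1)"

definition ratio_hi :: "real \<Rightarrow> real \<Rightarrow> ereal" where
  "ratio_hi a b = (if a < 0 then \<infinity> else if 0 < b \<or> (a = 0 \<and> b = 0)
     then (if a = 0 then \<infinity> else ereal (b / a)) else 0)"

lemma ratio_lo_nonneg: "0 \<le> ratio_lo a b"
  unfolding ratio_lo_def by auto

lemma ratio_lo_pos: "0 < a \<Longrightarrow> 0 < b \<Longrightarrow> ratio_lo a b = 0"
  unfolding ratio_lo_def by simp

lemma ratio_hi_pos: "0 < a \<Longrightarrow> 0 < b \<Longrightarrow> ratio_hi a b = ereal (b / a)"
  unfolding ratio_hi_def by simp

lemma ratio_interval_iff: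
  assumes "0 \<le> v"
  shows "a * v \<le> b \<and> (b = 0 \<longrightarrow> a \<le> 0) \<longleftrightarrow> ratio_lo a b \<le> v \<and> ereal v \<le> ratio_hi a b"
proof -
  consider "a < 0" | "a = 0" | "0 < a" by linarith
  then show ?thesis
  proof cases
    case 1
    then show ?thesis using assms unfolding ratio_lo_def ratio_hi_def
      by (auto simp: divide_le_eq mult.commute)
  next
    case 2
    then show ?thesis using assms unfolding ratio_lo_def ratio_hi_def by auto
  next
    case 3
    show ?thesis
    proof (cases "0 < b")
      case True
      then show ?thesis using 3 assms unfolding ratio_lo_def ratio_hi_def
        by (auto simp: le_divide_eq mult.commute)
    next
      case False
      have "0 \<le> a * v" using 3 assms by simp
      then have "\<not> (a * v \<le> b \<and> (b = 0 \<longrightarrow> a \<le> 0))" using False 3 by auto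
      then show ?thesis using False 3 unfolding ratio_lo_def ratio_hi_def by auto
    qed
  qed
qed

text \<open>The clause for s * y = 0 comes from v = 0: there the right-hand side is y * \<infinity>, and 0 * \<infinity> = 0.\<close>

lemma ereal_ratio_le_iff:
  assumes "0 < s" "0 < c" "0 \<le> v"
  shows "ereal x / ereal s \<le> ereal y / ereal (c * v) \<longleftrightarrow>
         c * x * v \<le> s * y \<and> (s * y = 0 \<longrightarrow> c * x \<le> 0)"
proof (cases "v = 0")
  case True
  have "ereal x / ereal s = ereal (x / s)" using assms(1) by simp
  moreover have "ereal y / ereal 0 = (if 0 < y then \<infinity> else if y < 0 then - \<infinity> else 0)"
    by (simp add: divide_ereal_def)
  ultimately show ?thesis
    using True assms by (auto simp: zero_less_mult_iff zero_le_mult_iff mult_le_0_iff divide_le_0_iff)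
next
  case False
  then have "0 < v" using assms by simp
  then have "ereal x / ereal s \<le> ereal y / ereal (c * v) \<longleftrightarrow> x / s \<le> y / (c * v)"
    using assms by simp
  also have "\<dots> \<longleftrightarrow> c * x * v \<le> s * y"
    using \<open>0 < v\<close> assms by (simp add: field_simps)
  finally show ?thesis
    using False assms by (auto simp: zero_less_mult_iff mult_le_0_iff)
qed

definition cond_focal_lo :: "real \<Rightarrow> (nat \<Rightarrow> real) \<Rightarrow> nat \<Rightarrow> real" where
  "cond_focal_lo t Z j = ratio_lo ((1 - t) * Z 1) (t * Z (j + 1))"

definition cond_focal_hi :: "real \<Rightarrow> (nat \<Rightarrow> real) \<Rightarrow> nat \<Rightarrow> ereal" where
  "cond_focal_hi t Z j = ratio_hi ((1 - t) * Z 1) (t * Z (j + 1))"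

lemma cond_focal_eq:
  assumes "1 \<le> K" "0 < t" "t < 1"
  shows "cond_focal K t Z = prob_simplex (K - 1) \<inter> coord_box (K - 1) (cond_focal_lo t Z) (cond_focal_hi t Z)"
proof -
  have "focal K Z \<inter> {\<theta>. \<theta> 1 = t} = {\<theta> \<in> prob_simplex K. \<theta> 1 = t \<and>
          (\<forall>j\<in>{2..K}. ereal (Z 1) / ereal t \<le> ereal (Z j) / ereal (\<theta> j))}"
    unfolding focal_def by auto
  then have "cond_focal K t Z = {w \<in> prob_simplex (K - 1). \<forall>j\<in>{1..K - 1}.
          ereal (Z 1) / ereal t \<le> ereal (Z (j + 1)) / ereal ((1 - t) * w j)}"
    unfolding cond_focal_def using assms
    by (subst prob_simplex_slice_image[symmetric]) auto
  also have "\<dots> = prob_simplex (K - 1) \<inter> coord_box (K - 1) (cond_focal_lo t Z) (cond_focal_hi t Z)"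
  proof -
    have "ereal (Z 1) / ereal t \<le> ereal (Z (j + 1)) / ereal ((1 - t) * w j) \<longleftrightarrow>
          cond_focal_lo t Z j \<le> w j \<and> ereal (w j) \<le> cond_focal_hi t Z j"
      if "w \<in> prob_simplex (K - 1)" "j \<in> {1..K - 1}" for w j
    proof -
      have "0 \<le> w j" using prob_simplexD(2)[OF that] .
      moreover have "0 < 1 - t" using assms(3) by simp
      ultimately show ?thesis
        unfolding cond_focal_lo_def cond_focal_hi_def
        using ereal_ratio_le_iff[OF assms(2)] ratio_interval_iff by blast
    qed
    then show ?thesis unfolding coord_box_def by blast
  qed
  finally show ?thesis .
qed

lemma cond_focal_eq_prob_simplex_iff:
  assumes "2 \<le> K" "0 < t" "t < 1"
  shows "cond_focal K t Z = prob_simplex (K - 1) \<longleftrightarrow>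
         (\<forall>j\<in>{1..K - 1}. cond_focal_lo t Z j \<le> (if K = 2 then 1 else 0) \<and> 1 \<le> cond_focal_hi t Z j)"
proof -
  have K: "1 \<le> K" "1 \<le> K - 1" "K - 1 = 1 \<longleftrightarrow> K = 2" using assms(1) by auto
  have "cond_focal K t Z = prob_simplex (K - 1) \<longleftrightarrow>
        prob_simplex (K - 1) \<subseteq> coord_box (K - 1) (cond_focal_lo t Z) (cond_focal_hi t Z)"
    unfolding cond_focal_eq[OF K(1) assms(2,3)] by blast
  then show ?thesis
    unfolding prob_simplex_subset_coord_box_iff[OF K(2)] K(3) .
qed

lemma cond_focal_nonempty_iff:
  assumes "1 \<le> K" "0 < t" "t < 1"
  shows "cond_focal K t Z \<noteq> {} \<longleftrightarrow>
         (\<forall>j\<in>{1..K - 1}. ereal (cond_focal_lo t Z j) \<le> cond_focal_hi t Z j) \<and>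
         (\<Sum>j=1..K - 1. cond_focal_lo t Z j) \<le> 1 \<and> 1 \<le> (\<Sum>j=1..K - 1. cond_focal_hi t Z j)"
  unfolding cond_focal_eq[OF assms]
  by (rule prob_simplex_Int_coord_box_nonempty_iff) (simp add: cond_focal_lo_def ratio_lo_nonneg)

lemma cond_focal_bounds_pos:
  assumes "0 < t" "t < 1" "0 < Z 1" "0 < Z (j + 1)"
  shows "cond_focal_lo t Z j = 0" "cond_focal_hi t Z j = ereal (t * Z (j + 1) / ((1 - t) * Z 1))"
  using assms by (simp_all add: cond_focal_lo_def cond_focal_hi_def ratio_lo_pos ratio_hi_pos)

lemma cond_focal_eq_prob_simplex_iff_pos:
  assumes K: "2 \<le> K" and t: "0 < t" "t < 1" and pos: "\<forall>j\<in>{1..K}. 0 < Z j"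
  shows "cond_focal K t Z = prob_simplex (K - 1) \<longleftrightarrow> (\<forall>j\<in>{2..K}. (1 - t) / t * Z 1 \<le> Z j)"
proof -
  have "cond_focal_lo t Z j \<le> (if K = 2 then 1 else 0) \<and> 1 \<le> cond_focal_hi t Z j \<longleftrightarrow>
        (1 - t) / t * Z 1 \<le> Z (j + 1)"
    if "j \<in> {1..K - 1}" for j
  proof -
    have "0 < Z 1" "0 < Z (j + 1)" using that K pos by auto
    moreover from this have "1 \<le> t * Z (j + 1) / ((1 - t) * Z 1) \<longleftrightarrow> (1 - t) / t * Z 1 \<le> Z (j + 1)"
      using t by (simp add: field_simps)
    ultimately show ?thesis
      using t by (simp add: cond_focal_bounds_pos one_ereal_def)
  qed
  then show ?thesis
    unfolding cond_focal_eq_prob_simplex_iff[OF K t]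
    using ball_atLeast2_atMost_shift[of K "\<lambda>j. (1 - t) / t * Z 1 \<le> Z j"] by auto
qed

lemma cond_focal_nonempty_iff_pos:
  assumes K: "2 \<le> K" and t: "0 < t" "t < 1" and pos: "\<forall>j\<in>{1..K}. 0 < Z j"
  shows "cond_focal K t Z \<noteq> {} \<longleftrightarrow> \<not> t / (1 - t) * (\<Sum>j\<in>{2..K}. Z j) < Z 1"
proof -
  have Z1: "0 < Z 1" "0 < (1 - t) * Z 1" using K t pos by auto
  have Zj: "0 < Z (j + 1)" if "j \<in> {1..K - 1}" for j using that pos by auto
  have "\<forall>j\<in>{1..K - 1}. ereal (cond_focal_lo t Z j) \<le> cond_focal_hi t Z j"
    "(\<Sum>j=1..K - 1. cond_focal_lo t Z j) \<le> 1"
    using t Z1 Zj by (auto simp: cond_focal_bounds_pos less_imp_le)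
  then have "cond_focal K t Z \<noteq> {} \<longleftrightarrow> 1 \<le> (\<Sum>j=1..K - 1. cond_focal_hi t Z j)"
    using cond_focal_nonempty_iff[of K t Z] K t by auto
  also have "(\<Sum>j=1..K - 1. cond_focal_hi t Z j) = (\<Sum>j=1..K - 1. ereal (t * Z (j + 1) / ((1 - t) * Z 1)))"
    using t Z1 Zj by (intro sum.cong) (auto simp: cond_focal_bounds_pos)
  also have "\<dots> = ereal (t * (\<Sum>j\<in>{2..K}. Z j) / ((1 - t) * Z 1))"
    using K by (simp add: sum_atLeast2_atMost_shift sum_distrib_left sum_divide_distrib)
  also have "1 \<le> \<dots> \<longleftrightarrow> (1 - t) * Z 1 \<le> t * (\<Sum>j\<in>{2..K}. Z j)"
    using Z1 by (simp add: one_ereal_def le_divide_eq)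
  also have "\<dots> \<longleftrightarrow> \<not> t / (1 - t) * (\<Sum>j\<in>{2..K}. Z j) < Z 1"
    using t by (auto simp: field_simps)
  finally show ?thesis .
qed

lemma measurable_ratio_lo [measurable]:
  assumes [measurable]: "f \<in> borel_measurable M" "g \<in> borel_measurable M"
  shows "(\<lambda>x. ratio_lo (f x) (g x)) \<in> borel_measurable M"
  unfolding ratio_lo_def by measurable

lemma measurable_ratio_hi [measurable]:
  assumes [measurable]: "f \<in> borel_measurable M" "g \<in> borel_measurable M"
  shows "(\<lambda>x. ratio_hi (f x) (g x)) \<in> borel_measurable M"
  unfolding ratio_hi_def by measurable

lemma measurable_Zmeasure_coord [measurable]: "(\<lambda>Z. Z i) \<in> borel_measurable (Zmeasure K)"
proof (cases "i \<in> {1..K}")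
  case True
  then have "(\<lambda>Z. Z i) \<in> measurable (Zmeasure K) (density lborel (exponential_density 1))"
    unfolding Zmeasure_def by (rule measurable_component_singleton)
  also have "measurable (Zmeasure K) (density lborel (exponential_density 1)) = borel_measurable (Zmeasure K)"
    by (rule measurable_cong_sets) simp_all
  finally show ?thesis .
next
  case False
  then have "Z i = undefined" if "Z \<in> space (Zmeasure K)" for Z
    using that unfolding Zmeasure_def by (auto simp: space_PiM PiE_def extensional_def)
  then have "(\<lambda>Z. Z i) \<in> borel_measurable (Zmeasure K) \<longleftrightarrow> (\<lambda>_. undefined :: real) \<in> borel_measurable (Zmeasure K)"
    by (intro measurable_cong[of "Zmeasure K" "\<lambda>Z. Z i" "\<lambda>_. undefined"])
  then show ?thesis by (simp only: measurable_const UNIV_I space_borel)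
qed

lemma measurable_cond_focal_lo [measurable]: "(\<lambda>Z. cond_focal_lo t Z j) \<in> borel_measurable (Zmeasure K)"
  unfolding cond_focal_lo_def by measurable

lemma measurable_cond_focal_hi [measurable]: "(\<lambda>Z. cond_focal_hi t Z j) \<in> borel_measurable (Zmeasure K)"
  unfolding cond_focal_hi_def by measurable

lemma sets_cond_focal_eq_prob_simplex:
  assumes "2 \<le> K" "0 < t" "t < 1"
  shows "{Z \<in> space (Zmeasure K). cond_focal K t Z = prob_simplex (K - 1)} \<in> sets (Zmeasure K)"
  unfolding cond_focal_eq_prob_simplex_iff[OF assms] by measurable

lemma sets_cond_focal_nonempty:
  assumes "1 \<le> K" "0 < t" "t < 1"
  shows "{Z \<in> space (Zmeasure K). cond_focal K t Z \<noteq> {}} \<in> sets (Zmeasure K)"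
proof -
  have [measurable]: "Measurable.pred (Zmeasure K) (\<lambda>Z. ereal (cond_focal_lo t Z j) \<le> cond_focal_hi t Z j)" for j
    unfolding Measurable.pred_def by (rule borel_measurable_le) measurable
  show ?thesis
    unfolding cond_focal_nonempty_iff[OF assms] by measurable
qed

section \<open>Independent standard exponential coordinates\<close>

abbreviation expo1 :: "real measure" where
  "expo1 \<equiv> density lborel (exponential_density 1)"

lemma prob_space_expo1: "prob_space expo1"
  by (rule prob_space_exponential_density) simp

interpretation expo1: product_sigma_finite "\<lambda>_::nat. expo1"
  unfolding product_sigma_finite_def
  using prob_space_expo1 prob_space_imp_sigma_finite by blast

lemma AE_expo1_neq: "AE x in expo1. x \<noteq> b"
  using AE_lborel_singleton[of b] by (subst AE_density) (auto elim: eventually_mono)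

lemma AE_expo1_pos: "AE x in expo1. 0 < x"
proof -
  have "AE x in lborel. x \<noteq> 0" by (rule AE_lborel_singleton)
  then have "AE x in lborel. 0 < ennreal (exponential_density 1 x) \<longrightarrow> 0 < x"
    by eventually_elim (auto simp: exponential_density_def)
  then show ?thesis by (subst AE_density) auto
qed

lemma AE_PiM_expo1_pos:
  assumes "finite I"
  shows "AE x in PiM I (\<lambda>_. expo1). \<forall>j\<in>I. 0 < x j"
  using assms by (intro AE_finite_allI AE_PiM_component prob_space_expo1 AE_expo1_pos) auto

lemma nn_integral_expo1_exp_tail:
  fixes c b :: real
  assumes c: "0 \<le> c" and b: "0 \<le> b"
  shows "(\<integral>\<^sup>+x. ennreal (exp (- c * x)) * indicator {b..} x \<partial>expo1) = ennreal (exp (- (1 + c) * b) / (1 + c))"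
proof -
  have "ennreal (exponential_density 1 x) * (ennreal (exp (- c * x)) * indicator {b..} x)
      = ennreal (exp (- (1 + c) * x)) * indicator {b..} x" for x
  proof (cases "b \<le> x")
    case True
    then have "exponential_density 1 x * exp (- c * x) = exp (- (1 + c) * x)"
      using b by (simp add: exponential_density_def mult_exp_exp algebra_simps)
    then show ?thesis using True by (simp add: ennreal_mult[symmetric])
  qed simp
  then have "(\<integral>\<^sup>+x. ennreal (exp (- c * x)) * indicator {b..} x \<partial>expo1)
      = (\<integral>\<^sup>+x. ennreal (exp (- (1 + c) * x)) * indicator {b..} x \<partial>lborel)"
    by (subst nn_integral_density) auto
  also have "\<dots> = ennreal (0 - (- exp (- (1 + c) * b) / (1 + c)))"
  proof (rule nn_integral_FTC_atLeast)
    fix x :: real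
    have "((\<lambda>x. - exp (- (1 + c) * x) / (1 + c)) has_real_derivative
        - (exp (- (1 + c) * x) * - (1 + c)) / (1 + c)) (at x)"
      using c by (auto intro!: derivative_eq_intros)
    moreover have "- (exp (- (1 + c) * x) * - (1 + c)) / (1 + c) = exp (- (1 + c) * x)"
      using c by (simp add: field_simps)
    ultimately show "((\<lambda>x. - exp (- (1 + c) * x) / (1 + c)) has_real_derivative exp (- (1 + c) * x)) (at x)"
      by simp
    have "((\<lambda>x::real. - exp (- (1 + c) * x) / (1 + c)) \<longlongrightarrow> - 0 / (1 + c)) at_top"
      using c by (intro tendsto_intros filterlim_compose[OF exp_at_bot]
          filterlim_tendsto_neg_mult_at_bot[OF tendsto_const] filterlim_ident) auto
    then show "((\<lambda>x::real. - exp (- (1 + c) * x) / (1 + c)) \<longlongrightarrow> 0) at_top" by simp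
  qed auto
  finally show ?thesis by simp
qed

lemma emeasure_expo1_atLeast:
  assumes "0 \<le> b"
  shows "emeasure expo1 {b..} = ennreal (exp (- b))"
  using nn_integral_expo1_exp_tail[of 0 b] assms by simp

lemma emeasure_expo1_greaterThan:
  assumes "0 \<le> b"
  shows "emeasure expo1 {b<..} = ennreal (exp (- b))"
proof -
  have "emeasure expo1 {b<..} = emeasure expo1 {b..}"
    by (rule emeasure_eq_AE) (use AE_expo1_neq[of b] in \<open>auto elim: eventually_mono\<close>)
  then show ?thesis using emeasure_expo1_atLeast[OF assms] by simp
qed

lemma nn_integral_expo1_exp:
  assumes "0 \<le> c"
  shows "(\<integral>\<^sup>+x. ennreal (exp (- c * x)) \<partial>expo1) = ennreal (1 / (1 + c))"
proof -
  have "(\<integral>\<^sup>+x. ennreal (exp (- c * x)) \<partial>expo1) = (\<integral>\<^sup>+x. ennreal (exp (- c * x)) * indicator {0..} x \<partial>expo1)"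
    by (rule nn_integral_cong_AE) (use AE_expo1_pos in \<open>auto elim: eventually_mono\<close>)
  then show ?thesis using nn_integral_expo1_exp_tail[OF assms order_refl] by simp
qed

lemma Zmeasure_eq_PiM_insert:
  assumes "1 \<le> K"
  shows "Zmeasure K = PiM (insert 1 {2..K}) (\<lambda>_. expo1)"
proof -
  have "{1..K} = insert 1 {2..K}" using assms by auto
  then show ?thesis unfolding Zmeasure_def by simp
qed

lemma space_PiM_fun_upd:
  assumes "x \<in> space (PiM I M)" "y \<in> space (M i)"
  shows "x(i := y) \<in> space (PiM (insert i I) M)"
  using assms by (auto simp: space_PiM PiE_def extensional_def)

lemma emeasure_Zmeasure_by_first_coord:
  assumes "1 \<le> K" "A \<in> sets (Zmeasure K)"
  shows "emeasure (Zmeasure K) A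
       = (\<integral>\<^sup>+y. (\<integral>\<^sup>+x. indicator A (x(1 := y)) \<partial>PiM {2..K} (\<lambda>_. expo1)) \<partial>expo1)"
proof -
  have "indicator A \<in> borel_measurable (PiM (insert 1 {2..K}) (\<lambda>_. expo1))"
    using assms(2) unfolding Zmeasure_eq_PiM_insert[OF assms(1)] by (rule borel_measurable_indicator)
  then show ?thesis
    using assms(2) unfolding Zmeasure_eq_PiM_insert[OF assms(1)]
    by (simp add: expo1.product_nn_integral_insert_rev flip: nn_integral_indicator)
qed

lemma emeasure_Zmeasure_by_other_coords:
  assumes "1 \<le> K" "A \<in> sets (Zmeasure K)"
  shows "emeasure (Zmeasure K) A
       = (\<integral>\<^sup>+x. (\<integral>\<^sup>+y. indicator A (x(1 := y)) \<partial>expo1) \<partial>PiM {2..K} (\<lambda>_. expo1))"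
proof -
  have "indicator A \<in> borel_measurable (PiM (insert 1 {2..K}) (\<lambda>_. expo1))"
    using assms(2) unfolding Zmeasure_eq_PiM_insert[OF assms(1)] by (rule borel_measurable_indicator)
  then show ?thesis
    using assms(2) unfolding Zmeasure_eq_PiM_insert[OF assms(1)]
    by (simp add: expo1.product_nn_integral_insert flip: nn_integral_indicator)
qed

lemma prob_space_Zmeasure: "prob_space (Zmeasure K)"
  unfolding Zmeasure_def by (intro prob_space_PiM prob_space_expo1)

lemma AE_Zmeasure_pos: "AE Z in Zmeasure K. \<forall>j\<in>{1..K}. 0 < Z j"
  unfolding Zmeasure_def by (rule AE_PiM_expo1_pos) simp

lemma sets_Zmeasure_scaled_first_le_rest:
  "{Z \<in> space (Zmeasure K). \<forall>j\<in>{2..K}. c * Z 1 \<le> Z j} \<in> sets (Zmeasure K)"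
proof -
  have [measurable]: "Measurable.pred (Zmeasure K) (\<lambda>Z. c * Z 1 \<le> Z j)" for j
    unfolding Measurable.pred_def by (rule borel_measurable_le) measurable
  show ?thesis by measurable
qed

lemma sets_Zmeasure_first_gt_scaled_rest_sum:
  "{Z \<in> space (Zmeasure K). c * (\<Sum>j\<in>{2..K}. Z j) < Z 1} \<in> sets (Zmeasure K)"
  by (rule borel_measurable_less) measurable

lemma emeasure_PiM_expo1_atLeast:
  fixes I :: "nat set"
  assumes "finite I" "0 \<le> b"
  shows "emeasure (PiM I (\<lambda>_. expo1)) (PiE I (\<lambda>_. {b..})) = ennreal (exp (- b) ^ card I)"
proof -
  have "emeasure (PiM I (\<lambda>_. expo1)) (PiE I (\<lambda>_. {b..})) = (\<Prod>j\<in>I. emeasure expo1 {b..})"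
    using assms(1) by (intro expo1.emeasure_PiM) auto
  then show ?thesis
    using assms(2) by (simp add: emeasure_expo1_atLeast ennreal_power)
qed

lemma measure_Zmeasure_scaled_first_le_rest:
  assumes K: "1 \<le> K" and c: "0 \<le> c"
  shows "measure (Zmeasure K) {Z \<in> space (Zmeasure K). \<forall>j\<in>{2..K}. c * Z 1 \<le> Z j}
       = 1 / (1 + real (K - 1) * c)"
proof -
  define F where "F = {Z \<in> space (Zmeasure K). \<forall>j\<in>{2..K}. c * Z 1 \<le> Z j}"
  have "F \<in> sets (Zmeasure K)"
    unfolding F_def by (rule sets_Zmeasure_scaled_first_le_rest)
  have slice: "(\<integral>\<^sup>+x. indicator F (x(1 := y)) \<partial>PiM {2..K} (\<lambda>_. expo1))
      = ennreal (exp (- (real (K - 1) * c) * y))" if "0 < y" for y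
  proof -
    have "indicator F (x(1 := y)) = (indicator (PiE {2..K} (\<lambda>_. {c * y..})) x :: ennreal)"
      if "x \<in> space (PiM {2..K} (\<lambda>_. expo1))" for x
    proof -
      have "x(1 := y) \<in> space (Zmeasure K)"
        using space_PiM_fun_upd[OF that, of y 1] unfolding Zmeasure_eq_PiM_insert[OF K] by simp
      moreover have "x \<in> PiE {2..K} (\<lambda>_. {c * y..}) \<longleftrightarrow> (\<forall>j\<in>{2..K}. c * y \<le> x j)"
        using that by (auto simp: space_PiM PiE_def)
      ultimately show ?thesis by (auto simp: F_def indicator_def)
    qed
    then have "(\<integral>\<^sup>+x. indicator F (x(1 := y)) \<partial>PiM {2..K} (\<lambda>_. expo1))
        = (\<integral>\<^sup>+x. indicator (PiE {2..K} (\<lambda>_. {c * y..})) x \<partial>PiM {2..K} (\<lambda>_. expo1))"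
      by (rule nn_integral_cong)
    also have "\<dots> = emeasure (PiM {2..K} (\<lambda>_. expo1)) (PiE {2..K} (\<lambda>_. {c * y..}))"
      by (intro nn_integral_indicator sets_PiM_I_finite) auto
    also have "\<dots> = ennreal (exp (- (c * y)) ^ (K - 1))"
      using c that by (simp add: emeasure_PiM_expo1_atLeast)
    also have "exp (- (c * y)) ^ (K - 1) = exp (- (real (K - 1) * c) * y)"
      by (simp add: exp_of_nat_mult[symmetric])
    finally show ?thesis .
  qed
  have "emeasure (Zmeasure K) F = (\<integral>\<^sup>+y. (\<integral>\<^sup>+x. indicator F (x(1 := y)) \<partial>PiM {2..K} (\<lambda>_. expo1)) \<partial>expo1)"
    using K \<open>F \<in> sets (Zmeasure K)\<close> by (rule emeasure_Zmeasure_by_first_coord)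
  also have "\<dots> = (\<integral>\<^sup>+y. ennreal (exp (- (real (K - 1) * c) * y)) \<partial>expo1)"
    by (rule nn_integral_cong_AE) (use AE_expo1_pos slice in \<open>auto elim: eventually_mono\<close>)
  also have "\<dots> = ennreal (1 / (1 + real (K - 1) * c))"
    using c by (intro nn_integral_expo1_exp) simp
  finally show ?thesis
    unfolding F_def using c by (intro measure_eq_emeasure_eq_ennreal) simp_all
qed

lemma measure_Zmeasure_first_gt_scaled_rest_sum:
  assumes K: "1 \<le> K" and c: "0 \<le> c"
  shows "measure (Zmeasure K) {Z \<in> space (Zmeasure K). c * (\<Sum>j\<in>{2..K}. Z j) < Z 1}
       = (1 / (1 + c)) ^ (K - 1)"
proof -
  define C where "C = {Z \<in> space (Zmeasure K). c * (\<Sum>j\<in>{2..K}. Z j) < Z 1}"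
  have "C \<in> sets (Zmeasure K)"
    unfolding C_def by (rule sets_Zmeasure_first_gt_scaled_rest_sum)
  have slice: "(\<integral>\<^sup>+y. indicator C (x(1 := y)) \<partial>expo1) = (\<Prod>j\<in>{2..K}. ennreal (exp (- c * x j)))"
    if x: "x \<in> space (PiM {2..K} (\<lambda>_. expo1))" and x_pos: "\<forall>j\<in>{2..K}. 0 < x j" for x
  proof -
    define m where "m = c * (\<Sum>j\<in>{2..K}. x j)"
    have "0 \<le> m"
      unfolding m_def using c x_pos by (intro mult_nonneg_nonneg sum_nonneg) (auto intro: less_imp_le)
    have "indicator C (x(1 := y)) = (indicator {m<..} y :: ennreal)" for y
    proof -
      have "x(1 := y) \<in> space (Zmeasure K)"
        using space_PiM_fun_upd[OF x, of y 1] unfolding Zmeasure_eq_PiM_insert[OF K] by simp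
      moreover have "(\<Sum>j\<in>{2..K}. (x(1 := y)) j) = (\<Sum>j\<in>{2..K}. x j)"
        by (intro sum.cong) auto
      ultimately show ?thesis by (auto simp: C_def m_def indicator_def)
    qed
    then have "(\<integral>\<^sup>+y. indicator C (x(1 := y)) \<partial>expo1) = emeasure expo1 {m<..}"
      by simp
    also have "\<dots> = ennreal (exp (- m))"
      using \<open>0 \<le> m\<close> by (rule emeasure_expo1_greaterThan)
    also have "exp (- m) = (\<Prod>j\<in>{2..K}. exp (- c * x j))"
      unfolding m_def by (simp add: exp_sum[symmetric] sum_distrib_left sum_negf)
    also have "ennreal (\<Prod>j\<in>{2..K}. exp (- c * x j)) = (\<Prod>j\<in>{2..K}. ennreal (exp (- c * x j)))"
      by (rule prod_ennreal[symmetric]) simp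
    finally show ?thesis .
  qed
  have "emeasure (Zmeasure K) C = (\<integral>\<^sup>+x. (\<integral>\<^sup>+y. indicator C (x(1 := y)) \<partial>expo1) \<partial>PiM {2..K} (\<lambda>_. expo1))"
    using K \<open>C \<in> sets (Zmeasure K)\<close> by (rule emeasure_Zmeasure_by_other_coords)
  also have "\<dots> = (\<integral>\<^sup>+x. (\<Prod>j\<in>{2..K}. ennreal (exp (- c * x j))) \<partial>PiM {2..K} (\<lambda>_. expo1))"
    by (rule nn_integral_cong_AE)
      (use AE_PiM_expo1_pos[of "{2..K}"] slice in \<open>auto elim: eventually_mono\<close>)
  also have "\<dots> = (\<Prod>j\<in>{2..K}. \<integral>\<^sup>+u. ennreal (exp (- c * u)) \<partial>expo1)"
    by (rule expo1.product_nn_integral_prod) auto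
  also have "\<dots> = ennreal ((1 / (1 + c)) ^ (K - 1))"
    using c nn_integral_expo1_exp[OF c] by (simp add: ennreal_power del: mult_minus_left)
  finally show ?thesis
    unfolding C_def using c by (intro measure_eq_emeasure_eq_ennreal) simp_all
qed

lemma cond_prob_vacuous_eq_measure_ratio:
  assumes K: "2 \<le> K" and t: "0 < t" "t < 1"
  defines "F \<equiv> {Z \<in> space (Zmeasure K). \<forall>j\<in>{2..K}. (1 - t) / t * Z 1 \<le> Z j}"
    and "C \<equiv> {Z \<in> space (Zmeasure K). t / (1 - t) * (\<Sum>j\<in>{2..K}. Z j) < Z 1}"
  shows "cond_prob (Zmeasure K) (\<lambda>Z. cond_focal K t Z = prob_simplex (K - 1)) (\<lambda>Z. cond_focal K t Z \<noteq> {})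
       = measure (Zmeasure K) F / (1 - measure (Zmeasure K) C)"
proof -
  interpret prob_space "Zmeasure K" by (rule prob_space_Zmeasure)
  have F_sets: "F \<in> events" and C_sets: "C \<in> events"
    unfolding F_def C_def by (rule sets_Zmeasure_scaled_first_le_rest sets_Zmeasure_first_gt_scaled_rest_sum)+
  have "1 \<in> {1..K - 1}" using K by auto
  then have simplex_ne: "prob_simplex (K - 1) \<noteq> {}"
    using prob_simplex_vertex by blast
  have "AE Z in Zmeasure K. (cond_focal K t Z = prob_simplex (K - 1) \<longleftrightarrow> Z \<in> F) \<and>
                                 (cond_focal K t Z \<noteq> {} \<longleftrightarrow> Z \<notin> C) \<and> (Z \<in> F \<longrightarrow> Z \<notin> C)"
    using AE_Zmeasure_pos AE_space
  proof eventually_elim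
    case (elim Z)
    have "cond_focal K t Z = prob_simplex (K - 1) \<longleftrightarrow> Z \<in> F"
      using cond_focal_eq_prob_simplex_iff_pos[OF K t elim(1)] elim(2) by (simp add: F_def)
    moreover have "cond_focal K t Z \<noteq> {} \<longleftrightarrow> Z \<notin> C"
      using cond_focal_nonempty_iff_pos[OF K t elim(1)] elim(2) by (simp add: C_def)
    ultimately show ?case using simplex_ne by auto
  qed
  then have AE_full: "AE Z in Zmeasure K. (cond_focal K t Z = prob_simplex (K - 1) \<and> cond_focal K t Z \<noteq> {}) \<longleftrightarrow> Z \<in> F"
    and AE_nonempty: "AE Z in Zmeasure K. cond_focal K t Z \<noteq> {} \<longleftrightarrow> Z \<notin> C"
    using AE_space by (auto elim: eventually_mono eventually_elim2)
  have F_eq: "{Z \<in> space (Zmeasure K). Z \<in> F} = F"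
    using sets.sets_into_space[OF F_sets] by auto
  have C_eq: "{Z \<in> space (Zmeasure K). Z \<notin> C} = space (Zmeasure K) - C"
    by auto
  have "\<P>(Z in Zmeasure K. cond_focal K t Z = prob_simplex (K - 1) \<and> cond_focal K t Z \<noteq> {}) = prob F"
    using prob_eq_AE[OF AE_full] sets.sets_Collect_conj[OF sets_cond_focal_nonempty[OF _ t]
      sets_cond_focal_eq_prob_simplex[OF K t]] F_sets K unfolding F_eq by simp
  moreover have "\<P>(Z in Zmeasure K. cond_focal K t Z \<noteq> {}) = prob (space (Zmeasure K) - C)"
    using prob_eq_AE[OF AE_nonempty] sets_cond_focal_nonempty[OF _ t] C_sets K unfolding C_eq by auto
  ultimately show ?thesis
    unfolding cond_prob_def using prob_compl[OF C_sets] by simp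
qed

lemma one_minus_power_eq_geometric_sum:
  fixes t :: real
  shows "1 - (1 - t) ^ (n + 1) = t * (1 + (\<Sum>i=1..n. (1 - t) ^ i))"
proof -
  have "(\<Sum>i<Suc n. (1 - t) ^ i) = (1 - t) ^ 0 + (\<Sum>i<n. (1 - t) ^ Suc i)"
    by (rule sum.lessThan_Suc_shift)
  also have "(\<Sum>i<n. (1 - t) ^ Suc i) = (\<Sum>i=Suc 0..n. (1 - t) ^ i)"
    by (rule sum.atLeast1_atMost_eq[symmetric])
  finally have "(\<Sum>i<n + 1. (1 - t) ^ i) = 1 + (\<Sum>i=1..n. (1 - t) ^ i)"
    by simp
  then show ?thesis
    using one_diff_power_eq[of "1 - t" "n + 1"] by simp
qed

theorem theorem3:
  fixes K :: nat and t :: real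
  assumes "2 \<le> K" and "0 < t" and "t < 1"
  shows "cond_prob (Zmeasure K) (\<lambda>Z. cond_focal K t Z = prob_simplex (K - 1))
                                (\<lambda>Z. cond_focal K t Z \<noteq> {})
         = 1 / (1 + real (K - 2) * (1 - t)) * (1 / (1 + (\<Sum>i=1..K-2. (1 - t) ^ i)))"
proof -
  have K: "1 \<le> K" "real (K - 1) = real (K - 2) + 1" "K - 1 = (K - 2) + 1"
    using assms(1) by (auto simp: of_nat_diff)
  have "1 / (1 + real (K - 1) * ((1 - t) / t)) = t / (1 + real (K - 2) * (1 - t))"
    using assms(2) unfolding K(2) by (simp add: field_simps)
  moreover have "1 / (1 + t / (1 - t)) = 1 - t"
    using assms(3) by (simp add: field_simps)
  moreover have "1 - (1 - t) ^ (K - 1) = t * (1 + (\<Sum>i=1..K-2. (1 - t) ^ i))"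
    unfolding K(3) by (rule one_minus_power_eq_geometric_sum)
  ultimately show ?thesis
    using cond_prob_vacuous_eq_measure_ratio[OF assms] assms(2,3)
      measure_Zmeasure_scaled_first_le_rest[OF K(1), of "(1 - t) / t"]
      measure_Zmeasure_first_gt_scaled_rest_sum[OF K(1), of "t / (1 - t)"]
    by simp
qed

end
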